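(* Every simple bipartite nonplanar cubic graph $B$ with at most $10$ vertices satisfies $K'(B,3)>1$.
   Context: A proper $3$-edge coloring assigns colors from $\{1,2,3\}$ to edges so that adjacent edges receive different colors. For colors $a\neq b$, an edge-Kempe chain is a connected component of the subgraph of edges colored $a$ or $b$; an edge-Kempe switch interchanges $a$ and $b$ on one chain. $K'(G,3)$ is the number of equivalence classes of proper $3$-edge colorings of $G$ under the equivalence relation generated by edge-Kempe switches. *)

theory Defs
  imports "HOL-Analysis.Analysis"
begin

definition simple_graph :: "'a set \<Rightarrow> 'a set set \<Rightarrow> bool" where
  "simple_graph V E \<longleftrightarrow> finite V \<and> (\<forall>e\<in>E. e \<subseteq> V \<and> card e = 2)"

definition cubic :: "'a set \<Rightarrow> 'a set set \<Rightarrow> bool" where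
  "cubic V E \<longleftrightarrow> (\<forall>v\<in>V. card {e\<in>E. v \<in> e} = 3)"

definition bipartite :: "'a set \<Rightarrow> 'a set set \<Rightarrow> bool" where
  "bipartite V E \<longleftrightarrow> (\<exists>X. X \<subseteq> V \<and> (\<forall>e\<in>E. card (e \<inter> X) = 1))"

definition planar :: "'a set \<Rightarrow> 'a set set \<Rightarrow> bool" where
  "planar V E \<longleftrightarrow> (\<exists>(p :: 'a \<Rightarrow> complex) (\<gamma> :: 'a set \<Rightarrow> real \<Rightarrow> complex).
     inj_on p V \<and>
     (\<forall>e\<in>E. arc (\<gamma> e) \<and> {pathstart (\<gamma> e), pathfinish (\<gamma> e)} = p ` e) \<and>
     (\<forall>e\<in>E. \<gamma> e ` {0<..<1} \<inter> p ` V = {}) \<and>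
     (\<forall>e\<in>E. \<forall>f\<in>E. e \<noteq> f \<longrightarrow> \<gamma> e ` {0<..<1} \<inter> \<gamma> f ` {0..1} = {}))"

definition edge_colorings3 :: "'a set set \<Rightarrow> ('a set \<Rightarrow> nat) set" where
  "edge_colorings3 E = {c. (\<forall>e\<in>E. c e \<in> {1,2,3}) \<and> (\<forall>e. e \<notin> E \<longrightarrow> c e = 0) \<and>
      (\<forall>e\<in>E. \<forall>f\<in>E. e \<noteq> f \<and> e \<inter> f \<noteq> {} \<longrightarrow> c e \<noteq> c f)}"

definition ab_edges :: "'a set set \<Rightarrow> ('a set \<Rightarrow> nat) \<Rightarrow> nat \<Rightarrow> nat \<Rightarrow> 'a set set" where
  "ab_edges E c a b = {e\<in>E. c e = a \<or> c e = b}"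

definition kempe_chain :: "'a set set \<Rightarrow> ('a set \<Rightarrow> nat) \<Rightarrow> nat \<Rightarrow> nat \<Rightarrow> 'a set \<Rightarrow> 'a set set" where
  "kempe_chain E c a b e0 =
     {f. (\<lambda>x y. x \<in> ab_edges E c a b \<and> y \<in> ab_edges E c a b \<and> x \<inter> y \<noteq> {})\<^sup>*\<^sup>* e0 f}"

definition swap_col :: "nat \<Rightarrow> nat \<Rightarrow> nat \<Rightarrow> nat" where
  "swap_col a b x = (if x = a then b else if x = b then a else x)"

definition kempe_switch ::
  "'a set set \<Rightarrow> ('a set \<Rightarrow> nat) \<Rightarrow> nat \<Rightarrow> nat \<Rightarrow> 'a set \<Rightarrow> ('a set \<Rightarrow> nat)" where
  "kempe_switch E c a b e0 =
     (\<lambda>e. if e \<in> kempe_chain E c a b e0 then swap_col a b (c e) else c e)"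

definition kempe_step :: "'a set set \<Rightarrow> ('a set \<Rightarrow> nat) \<Rightarrow> ('a set \<Rightarrow> nat) \<Rightarrow> bool" where
  "kempe_step E c d \<longleftrightarrow> c \<in> edge_colorings3 E \<and>
     (\<exists>a b e0. a \<in> {1,2,3} \<and> b \<in> {1,2,3} \<and> a \<noteq> b \<and> e0 \<in> ab_edges E c a b \<and>
        d = kempe_switch E c a b e0)"

definition kempe_rel :: "'a set set \<Rightarrow> (('a set \<Rightarrow> nat) \<times> ('a set \<Rightarrow> nat)) set" where
  "kempe_rel E = {(c, d). c \<in> edge_colorings3 E \<and> d \<in> edge_colorings3 E \<and>
                          equivclp (kempe_step E) c d}"

text \<open>K'(G,3): number of edge-Kempe equivalence classes of proper 3-edge colourings.\<close>
definition edge_kempe_classes3 :: "'a set set \<Rightarrow> nat" where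
  "edge_kempe_classes3 E = card (edge_colorings3 E // kempe_rel E)"

end

theory Submission
  imports Defs
begin

text \<open>
  Call a vertex a lone agreement of two proper 3-edge-colourings \<open>c\<close>, \<open>d\<close> of a cubic graph if
  exactly one of its three edges gets the same colour under \<open>c\<close> and \<open>d\<close>. An \<open>(a,b)\<close>-Kempe
  switch of \<open>c\<close> changes nothing at the vertices off the switched chain and toggles lone
  agreement at every vertex on it: there the \<open>d\<close>-colours of the edges coloured \<open>a, b, x\<close> by \<open>c\<close>
  form a permutation of \<open>{a, b, x}\<close>, which has exactly one fixed point iff it is a
  transposition, and the switch composes it with the transposition \<open>(a b)\<close>. The chain covers
  an even number of vertices, matched up by its \<open>a\<close>-edges. So the parity of the number of lone
  agreements with a fixed \<open>d\<close> is a Kempe invariant, even for \<open>c = d\<close>, and two colourings with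
  an odd number of lone agreements lie in different classes.

  A bipartite cubic graph with sides of size \<open>n \<le> 5\<close> has \<open>n \<ge> 3\<close>. For \<open>n = 3\<close> it is \<open>K\<^sub>3\<^sub>,\<^sub>3\<close>, for
  \<open>n = 4\<close> it is \<open>K\<^sub>4\<^sub>,\<^sub>4\<close> minus a perfect matching, the planar cube, and for \<open>n = 5\<close> its complement
  in \<open>K\<^sub>5\<^sub>,\<^sub>5\<close> is 2-regular, hence a 10-cycle or a 4-cycle plus a 6-cycle. In the three nonplanar
  cases two colourings with an odd number of lone agreements are written down as tables.
\<close>

section \<open>Lone agreements and Kempe switches\<close>

definition agreement_degree :: "'a set set \<Rightarrow> ('a set \<Rightarrow> nat) \<Rightarrow> ('a set \<Rightarrow> nat) \<Rightarrow> 'a \<Rightarrow> nat" where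
  "agreement_degree E c d v = card {e\<in>E. v \<in> e \<and> c e = d e}"

definition lone_agreements :: "'a set \<Rightarrow> 'a set set \<Rightarrow> ('a set \<Rightarrow> nat) \<Rightarrow> ('a set \<Rightarrow> nat) \<Rightarrow> 'a set" where
  "lone_agreements V E c d = {v\<in>V. agreement_degree E c d v = 1}"

lemma edge_colorings3D:
  assumes "c \<in> edge_colorings3 E"
  shows "e \<in> E \<Longrightarrow> c e \<in> {1,2,3}" and "e \<notin> E \<Longrightarrow> c e = 0"
    and "e \<in> E \<Longrightarrow> f \<in> E \<Longrightarrow> e \<noteq> f \<Longrightarrow> e \<inter> f \<noteq> {} \<Longrightarrow> c e \<noteq> c f"
  using assms unfolding edge_colorings3_def by auto

lemma finite_edge_colorings3:
  assumes "finite E"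
  shows "finite (edge_colorings3 E)"
proof -
  have "inj_on (\<lambda>c. restrict c E) (edge_colorings3 E)"
  proof (rule inj_onI)
    fix c d assume "c \<in> edge_colorings3 E" "d \<in> edge_colorings3 E"
      and "restrict c E = restrict d E"
    then show "c = d"
      by (metis edge_colorings3D(2) ext restrict_apply')
  qed
  moreover have "(\<lambda>c. restrict c E) ` edge_colorings3 E \<subseteq> PiE E (\<lambda>_. {1,2,3})"
    using edge_colorings3D(1) by fastforce
  moreover have "finite (PiE E (\<lambda>_. {1,2,3::nat}))"
    using assms by (intro finite_PiE) auto
  ultimately show ?thesis
    using finite_imageD finite_subset by blast
qed

lemma kempe_chain_subset_ab_edges:
  assumes "e0 \<in> ab_edges E c a b"
  shows "kempe_chain E c a b e0 \<subseteq> ab_edges E c a b"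
proof
  fix f assume "f \<in> kempe_chain E c a b e0"
  then have "(\<lambda>x y. x \<in> ab_edges E c a b \<and> y \<in> ab_edges E c a b \<and> x \<inter> y \<noteq> {})\<^sup>*\<^sup>* e0 f"
    unfolding kempe_chain_def by simp
  then show "f \<in> ab_edges E c a b"
    by (induct rule: rtranclp_induct) (use assms in auto)
qed

lemma kempe_chain_closed:
  assumes "e0 \<in> ab_edges E c a b" "f \<in> kempe_chain E c a b e0"
    and "g \<in> ab_edges E c a b" "f \<inter> g \<noteq> {}"
  shows "g \<in> kempe_chain E c a b e0"
proof -
  have "f \<in> ab_edges E c a b"
    using kempe_chain_subset_ab_edges assms(1,2) by blast
  then show ?thesis
    using assms unfolding kempe_chain_def by (auto intro: rtranclp.rtrancl_into_rtrancl)
qed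

lemma card_filter_three:
  assumes "x \<noteq> y" "x \<noteq> z" "y \<noteq> z"
  shows "card {e\<in>{x,y,z}. P e} = of_bool (P x) + of_bool (P y) + of_bool (P z)"
proof -
  have "card {e\<in>{x,y,z}. P e} = (\<Sum>e\<in>{x,y,z}. if P e then 1 else 0)"
    by (simp add: sum.If_cases Int_def)
  then show ?thesis using assms by simp
qed

lemma even_card_sym_diff:
  assumes "finite A" "finite T"
  shows "even (card (sym_diff A T)) \<longleftrightarrow> (even (card A) \<longleftrightarrow> even (card T))"
proof -
  have "card ((A - T) \<union> (T - A)) = card (A - T) + card (T - A)"
    using assms by (intro card_Un_disjoint) auto
  moreover have "card A = card (A - T) + card (A \<inter> T)"
    using card_Int_Diff[OF assms(1), of T] by simp
  moreover have "card T = card (T - A) + card (A \<inter> T)"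
    using card_Int_Diff[OF assms(2), of A] by (simp add: Int_commute)
  ultimately show ?thesis by presburger
qed

lemma transposition_toggles_one_fixpoint:
  assumes "a \<noteq> b" "a \<noteq> x" "b \<noteq> x" "u \<noteq> w" "u \<noteq> z" "w \<noteq> z"
    and "u \<in> {a, b, x}" "w \<in> {a, b, x}" "z \<in> {a, b, x}"
  shows "of_bool (b = u) + of_bool (a = w) + of_bool (x = z) = (1::nat)
    \<longleftrightarrow> of_bool (a = u) + of_bool (b = w) + of_bool (x = z) \<noteq> (1::nat)"
  using assms by auto

locale cubic_graph =
  fixes V :: "'a set" and E :: "'a set set"
  assumes simple: "simple_graph V E" and cubic: "cubic V E"
begin

lemma finite_V: "finite V"
  using simple unfolding simple_graph_def by blast

lemma finite_E: "finite E"
  using simple unfolding simple_graph_def by (meson Pow_iff finite_Pow_iff finite_subset subsetI)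

lemma edge_subset: "e \<in> E \<Longrightarrow> e \<subseteq> V"
  and card_edge: "e \<in> E \<Longrightarrow> card e = 2"
  using simple unfolding simple_graph_def by auto

lemma coloring_unique_edge:
  assumes c: "c \<in> edge_colorings3 E" and v: "v \<in> V" and k: "k \<in> {1,2,3}"
  shows "\<exists>!e. e \<in> E \<and> v \<in> e \<and> c e = k"
proof -
  define S where "S = {e\<in>E. v \<in> e}"
  have "card S = 3" using cubic v unfolding cubic_def S_def by simp
  moreover have inj: "inj_on c S"
    by (rule inj_onI) (use edge_colorings3D(3)[OF c] in \<open>auto simp: S_def\<close>)
  moreover have "c ` S \<subseteq> {1,2,3}"
    using edge_colorings3D(1)[OF c] unfolding S_def by auto
  ultimately have "c ` S = {1,2,3}"
    by (intro card_subset_eq) (simp_all add: card_image)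
  then obtain e where "e \<in> S" "c e = k" using k by (metis imageE)
  with inj show ?thesis unfolding S_def inj_on_def by blast
qed

lemma kempe_chain_star:
  assumes c: "c \<in> edge_colorings3 E" and ab: "a \<in> {1,2,3}" "b \<in> {1,2,3}" "a \<noteq> b"
    and e0: "e0 \<in> ab_edges E c a b" and f: "f \<in> kempe_chain E c a b e0" "v \<in> f"
  obtains ea eb ex where "{e\<in>E. v \<in> e} = {ea, eb, ex}" "ea \<noteq> eb" "ea \<noteq> ex" "eb \<noteq> ex"
    and "c ea = a" "c eb = b" "c ex = 6 - a - b"
    and "ea \<in> kempe_chain E c a b e0" "eb \<in> kempe_chain E c a b e0"
    and "ex \<notin> kempe_chain E c a b e0"
proof -
  let ?K = "kempe_chain E c a b e0"
  have "f \<in> E"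
    using kempe_chain_subset_ab_edges[OF e0] f(1) unfolding ab_edges_def by blast
  then have v: "v \<in> V" using edge_subset f(2) by blast
  have colours: "{1,2,3} = {a, b, 6 - a - b}" using ab by auto
  have star_edge: "\<And>k. k \<in> {1,2,3} \<Longrightarrow> \<exists>!e. e \<in> E \<and> v \<in> e \<and> c e = k"
    using coloring_unique_edge[OF c v] .
  obtain ea eb ex where
    ea: "ea \<in> E" "v \<in> ea" "c ea = a" and eb: "eb \<in> E" "v \<in> eb" "c eb = b"
    and ex: "ex \<in> E" "v \<in> ex" "c ex = 6 - a - b"
    using star_edge colours by (metis insertI1 insertI2)
  have "{e\<in>E. v \<in> e} = {ea, eb, ex}"
  proof (intro set_eqI iffI)
    fix e assume e: "e \<in> {e\<in>E. v \<in> e}"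
    have same: "e' \<in> E \<Longrightarrow> v \<in> e' \<Longrightarrow> c e = c e' \<Longrightarrow> e = e'" for e'
      using edge_colorings3D(3)[OF c, of e e'] e by blast
    have "c e \<in> {a, b, 6 - a - b}"
      using edge_colorings3D(1)[OF c] e unfolding colours by blast
    then show "e \<in> {ea, eb, ex}"
      using same ea eb ex by auto
  qed (use ea eb ex in auto)
  moreover have "ea \<in> ?K" "eb \<in> ?K"
    using kempe_chain_closed[OF e0 f(1)] f(2) ea eb unfolding ab_edges_def by auto
  moreover have "ex \<notin> ?K"
    using kempe_chain_subset_ab_edges[OF e0] ex ab unfolding ab_edges_def by auto
  ultimately show ?thesis
    using that ea eb ex ab by auto
qed

lemma agreement_degree_switch_inside:
  assumes c: "c \<in> edge_colorings3 E" and d0: "d0 \<in> edge_colorings3 E"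
    and ab: "a \<in> {1,2,3}" "b \<in> {1,2,3}" "a \<noteq> b"
    and e0: "e0 \<in> ab_edges E c a b" and f: "f \<in> kempe_chain E c a b e0" "v \<in> f"
  shows "agreement_degree E (kempe_switch E c a b e0) d0 v = 1 \<longleftrightarrow> agreement_degree E c d0 v \<noteq> 1"
proof -
  let ?d = "kempe_switch E c a b e0" and ?x = "6 - a - b"
  obtain ea eb ex where star: "{e\<in>E. v \<in> e} = {ea, eb, ex}"
    and dist: "ea \<noteq> eb" "ea \<noteq> ex" "eb \<noteq> ex"
    and col: "c ea = a" "c eb = b" "c ex = ?x"
    and chain: "ea \<in> kempe_chain E c a b e0" "eb \<in> kempe_chain E c a b e0"
      "ex \<notin> kempe_chain E c a b e0"
    using kempe_chain_star[OF c ab e0 f] .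
  have colours: "{1,2,3} = {a, b, ?x}" using ab by auto
  have at_v: "{e\<in>E. v \<in> e \<and> g e = d0 e} = {e\<in>{ea, eb, ex}. g e = d0 e}" for g
    using star by blast
  have "?d ea = b" "?d eb = a" "?d ex = ?x"
    using col chain ab unfolding kempe_switch_def swap_col_def by auto
  then have switched: "agreement_degree E ?d d0 v
      = of_bool (b = d0 ea) + of_bool (a = d0 eb) + of_bool (?x = d0 ex)"
    unfolding agreement_degree_def at_v card_filter_three[OF dist] by simp
  have original: "agreement_degree E c d0 v
      = of_bool (a = d0 ea) + of_bool (b = d0 eb) + of_bool (?x = d0 ex)"
    unfolding agreement_degree_def at_v card_filter_three[OF dist] col by simp
  have "ea \<in> E" "eb \<in> E" "ex \<in> E" "v \<in> ea" "v \<in> eb" "v \<in> ex"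
    using star by blast+
  then have "d0 ea \<noteq> d0 eb" "d0 ea \<noteq> d0 ex" "d0 eb \<noteq> d0 ex"
    and "d0 ea \<in> {a, b, ?x}" "d0 eb \<in> {a, b, ?x}" "d0 ex \<in> {a, b, ?x}"
    using edge_colorings3D(3)[OF d0] edge_colorings3D(1)[OF d0, unfolded colours] dist
    by blast+
  moreover have "a \<noteq> ?x" "b \<noteq> ?x" using ab by auto
  ultimately show ?thesis
    unfolding switched original using transposition_toggles_one_fixpoint[OF ab(3)] by blast
qed

lemma agreement_degree_switch_outside:
  assumes "\<And>f. f \<in> kempe_chain E c a b e0 \<Longrightarrow> v \<notin> f"
  shows "agreement_degree E (kempe_switch E c a b e0) d0 v = agreement_degree E c d0 v"
proof -
  have "{e\<in>E. v \<in> e \<and> kempe_switch E c a b e0 e = d0 e} = {e\<in>E. v \<in> e \<and> c e = d0 e}"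
    using assms unfolding kempe_switch_def by auto
  then show ?thesis unfolding agreement_degree_def by simp
qed

lemma kempe_chain_vertices_even:
  assumes c: "c \<in> edge_colorings3 E" and ab: "a \<in> {1,2,3}" "b \<in> {1,2,3}" "a \<noteq> b"
    and e0: "e0 \<in> ab_edges E c a b"
  shows "even (card (\<Union>(kempe_chain E c a b e0)))"
proof -
  let ?K = "kempe_chain E c a b e0"
  define Ka where "Ka = {e\<in>?K. c e = a}"
  have KE: "?K \<subseteq> E"
    using kempe_chain_subset_ab_edges[OF e0] unfolding ab_edges_def by blast
  have "\<Union>?K = \<Union>Ka"
  proof
    show "\<Union>?K \<subseteq> \<Union>Ka"
    proof
      fix v assume "v \<in> \<Union>?K"
      then obtain f where f: "f \<in> ?K" "v \<in> f" by blast
      obtain ea eb ex where "{e\<in>E. v \<in> e} = {ea, eb, ex}" "c ea = a" "ea \<in> ?K"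
        by (rule kempe_chain_star[OF c ab e0 f])
      then show "v \<in> \<Union>Ka" unfolding Ka_def by blast
    qed
  qed (auto simp: Ka_def)
  moreover have "pairwise disjnt Ka"
  proof (rule pairwiseI)
    fix e f assume "e \<in> Ka" "f \<in> Ka" "e \<noteq> f"
    then show "disjnt e f"
      using edge_colorings3D(3)[OF c, of e f] KE unfolding disjnt_def Ka_def by auto
  qed
  moreover have "card e = 2" if "e \<in> Ka" for e
    using card_edge KE that unfolding Ka_def by blast
  ultimately have "card (\<Union>?K) = 2 * card Ka"
    by (simp add: card_Union_disjoint card_ge_0_finite)
  then show ?thesis by simp
qed

lemma kempe_step_lone_agreements_parity:
  assumes d0: "d0 \<in> edge_colorings3 E" and step: "kempe_step E c d"
  shows "even (card (lone_agreements V E d d0)) \<longleftrightarrow> even (card (lone_agreements V E c d0))"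
proof -
  obtain a b e0 where c: "c \<in> edge_colorings3 E"
    and ab: "a \<in> {1,2,3}" "b \<in> {1,2,3}" "a \<noteq> b"
    and e0: "e0 \<in> ab_edges E c a b" and d: "d = kempe_switch E c a b e0"
    using step unfolding kempe_step_def by blast
  define T where "T = \<Union>(kempe_chain E c a b e0)"
  have TV: "T \<subseteq> V"
    using kempe_chain_subset_ab_edges[OF e0] edge_subset unfolding T_def ab_edges_def by blast
  have "lone_agreements V E d d0 = sym_diff (lone_agreements V E c d0) T"
  proof (intro set_eqI)
    fix v
    show "v \<in> lone_agreements V E d d0 \<longleftrightarrow> v \<in> sym_diff (lone_agreements V E c d0) T"
    proof (cases "v \<in> T")
      case True
      then show ?thesis
        using TV agreement_degree_switch_inside[OF c d0 ab e0]
        unfolding lone_agreements_def d T_def by blast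
    next
      case False
      then have "agreement_degree E d d0 v = agreement_degree E c d0 v"
        unfolding d T_def by (blast intro: agreement_degree_switch_outside)
      with False show ?thesis
        unfolding lone_agreements_def by auto
    qed
  qed
  moreover have "finite (lone_agreements V E c d0)" "finite T"
    using finite_V TV finite_subset unfolding lone_agreements_def by auto
  ultimately show ?thesis
    using kempe_chain_vertices_even[OF c ab e0] by (simp add: even_card_sym_diff T_def)
qed

lemma kempe_equiv_lone_agreements_parity:
  assumes d0: "d0 \<in> edge_colorings3 E" and "equivclp (kempe_step E) c d"
  shows "even (card (lone_agreements V E d d0)) \<longleftrightarrow> even (card (lone_agreements V E c d0))"
  using assms(2) unfolding equivclp_def
proof (induct rule: rtranclp_induct)
  case (step y z)
  then have "kempe_step E y z \<or> kempe_step E z y" unfolding symclp_def by simp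
  then show ?case
    using step.hyps(3) kempe_step_lone_agreements_parity[OF d0] by metis
qed simp

lemma lone_agreements_self: "lone_agreements V E c c = {}"
  using cubic unfolding lone_agreements_def agreement_degree_def cubic_def by simp

lemma edge_kempe_classes3_gt1:
  assumes c: "c \<in> edge_colorings3 E" and d: "d \<in> edge_colorings3 E"
    and odd: "odd (card (lone_agreements V E d c))"
  shows "edge_kempe_classes3 E > 1"
proof -
  let ?C = "edge_colorings3 E" and ?R = "kempe_rel E"
  have "finite (?C // ?R)"
    using finite_edge_colorings3[OF finite_E] unfolding quotient_def by simp
  moreover have "?R `` {c} \<in> ?C // ?R" "?R `` {d} \<in> ?C // ?R"
    using c d by (simp_all add: quotientI)
  moreover have "c \<in> ?R `` {c}" using c unfolding kempe_rel_def by simp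
  moreover have "c \<notin> ?R `` {d}"
  proof
    assume "c \<in> ?R `` {d}"
    then have "equivclp (kempe_step E) d c" unfolding kempe_rel_def by simp
    then show False
      using kempe_equiv_lone_agreements_parity[OF c] odd lone_agreements_self by fastforce
  qed
  ultimately have "card {?R `` {c}, ?R `` {d}} \<le> card (?C // ?R)"
    and "?R `` {c} \<noteq> ?R `` {d}"
    by (auto intro: card_mono)
  then show ?thesis unfolding edge_kempe_classes3_def by simp
qed

end

section \<open>Graphs given by a biadjacency table\<close>

text \<open>Entries outside \<open>M\<close> are irrelevant; the tables below put \<open>0\<close> there.\<close>

definition latin_table :: "nat \<Rightarrow> (nat \<Rightarrow> nat \<Rightarrow> bool) \<Rightarrow> (nat \<Rightarrow> nat \<Rightarrow> nat) \<Rightarrow> bool" where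
  "latin_table n M L \<longleftrightarrow> (\<forall>i<n. \<forall>j<n. M i j \<longrightarrow> L i j \<in> {1,2,3}) \<and>
     (\<forall>i<n. \<forall>j<n. \<forall>l<n. M i j \<longrightarrow> M i l \<longrightarrow> j \<noteq> l \<longrightarrow> L i j \<noteq> L i l) \<and>
     (\<forall>i<n. \<forall>k<n. \<forall>j<n. M i j \<longrightarrow> M k j \<longrightarrow> i \<noteq> k \<longrightarrow> L i j \<noteq> L k j)"

definition lone_matches :: "nat \<Rightarrow> (nat \<Rightarrow> nat \<Rightarrow> bool) \<Rightarrow> (nat \<Rightarrow> nat \<Rightarrow> nat) \<Rightarrow> (nat \<Rightarrow> nat \<Rightarrow> nat) \<Rightarrow> nat" where
  "lone_matches n M L1 L2 = card {i. i < n \<and> card {j. j < n \<and> M i j \<and> L1 i j = L2 i j} = 1}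
     + card {j. j < n \<and> card {i. i < n \<and> M i j \<and> L1 i j = L2 i j} = 1}"

locale biadjacency =
  fixes V :: "'a set" and E :: "'a set set" and X :: "'a set"
    and n :: nat and gx gy :: "nat \<Rightarrow> 'a" and M :: "nat \<Rightarrow> nat \<Rightarrow> bool"
  assumes X_subset: "X \<subseteq> V"
    and bij_gx: "bij_betw gx {..<n} X" and bij_gy: "bij_betw gy {..<n} (V - X)"
    and edges: "E = {{gx i, gy j} | i j. i < n \<and> j < n \<and> M i j}"
begin

lemma vertices: "V = gx ` {..<n} \<union> gy ` {..<n}"
  using X_subset bij_betw_imp_surj_on[OF bij_gx] bij_betw_imp_surj_on[OF bij_gy] by blast

lemma gx_eq_iff: "i < n \<Longrightarrow> k < n \<Longrightarrow> gx i = gx k \<longleftrightarrow> i = k"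
  and gy_eq_iff: "i < n \<Longrightarrow> k < n \<Longrightarrow> gy i = gy k \<longleftrightarrow> i = k"
  using bij_betw_imp_inj_on[OF bij_gx] bij_betw_imp_inj_on[OF bij_gy] unfolding inj_on_def by blast+

lemma gx_neq_gy: "i < n \<Longrightarrow> j < n \<Longrightarrow> gx i \<noteq> gy j"
  using bij_betwE[OF bij_gx] bij_betwE[OF bij_gy] by (metis DiffD2 lessThan_iff)

lemma edgeE:
  assumes "e \<in> E"
  obtains i j where "i < n" "j < n" "M i j" "e = {gx i, gy j}"
  using assms unfolding edges by blast

lemma edge_iff: "i < n \<Longrightarrow> j < n \<Longrightarrow> {gx i, gy j} \<in> E \<longleftrightarrow> M i j"
  unfolding edges using gx_eq_iff gy_eq_iff gx_neq_gy by (auto simp: doubleton_eq_iff)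

lemma edge_eq_iff:
  "i < n \<Longrightarrow> j < n \<Longrightarrow> k < n \<Longrightarrow> l < n \<Longrightarrow> {gx i, gy j} = {gx k, gy l} \<longleftrightarrow> i = k \<and> j = l"
  using gx_eq_iff gy_eq_iff gx_neq_gy by (auto simp: doubleton_eq_iff)

lemma edges_meet_iff:
  "i < n \<Longrightarrow> j < n \<Longrightarrow> k < n \<Longrightarrow> l < n \<Longrightarrow> {gx i, gy j} \<inter> {gx k, gy l} \<noteq> {} \<longleftrightarrow> i = k \<or> j = l"
  using gx_eq_iff gy_eq_iff gx_neq_gy by auto

lemma row_index: "i < n \<Longrightarrow> j < n \<Longrightarrow> (THE k. k < n \<and> gx k \<in> {gx i, gy j}) = i"
  and col_index: "i < n \<Longrightarrow> j < n \<Longrightarrow> (THE k. k < n \<and> gy k \<in> {gx i, gy j}) = j"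
  using gx_eq_iff gy_eq_iff gx_neq_gy by (auto intro!: the_equality dest: sym)

definition table_coloring :: "(nat \<Rightarrow> nat \<Rightarrow> nat) \<Rightarrow> 'a set \<Rightarrow> nat" where
  "table_coloring L e =
     (if e \<in> E then L (THE i. i < n \<and> gx i \<in> e) (THE j. j < n \<and> gy j \<in> e) else 0)"

lemma table_coloring_edge: "i < n \<Longrightarrow> j < n \<Longrightarrow> M i j \<Longrightarrow> table_coloring L {gx i, gy j} = L i j"
  unfolding table_coloring_def using edge_iff row_index col_index by simp

lemma table_coloring_in_edge_colorings3:
  assumes L: "latin_table n M L"
  shows "table_coloring L \<in> edge_colorings3 E"
  unfolding edge_colorings3_def
proof (intro CollectI conjI ballI allI impI)
  fix e assume "e \<in> E"
  then obtain i j where "i < n" "j < n" "M i j" "e = {gx i, gy j}" by (rule edgeE)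
  then show "table_coloring L e \<in> {1,2,3}"
    using L table_coloring_edge unfolding latin_table_def by simp
next
  fix e f assume "e \<in> E" "f \<in> E" and ef: "e \<noteq> f \<and> e \<inter> f \<noteq> {}"
  obtain i j where ij: "i < n" "j < n" "M i j" "e = {gx i, gy j}" by (rule edgeE[OF \<open>e \<in> E\<close>])
  obtain k l where kl: "k < n" "l < n" "M k l" "f = {gx k, gy l}" by (rule edgeE[OF \<open>f \<in> E\<close>])
  have "(i = k \<and> j \<noteq> l) \<or> (i \<noteq> k \<and> j = l)"
    using ef ij kl edge_eq_iff edges_meet_iff by metis
  then have "L i j \<noteq> L k l"
    using L ij kl unfolding latin_table_def by blast
  then show "table_coloring L e \<noteq> table_coloring L f"
    using table_coloring_edge ij kl by simp
qed (simp add: table_coloring_def)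

lemma agreement_degree_row:
  assumes i: "i < n"
  shows "agreement_degree E (table_coloring L1) (table_coloring L2) (gx i)
    = card {j. j < n \<and> M i j \<and> L1 i j = L2 i j}"
proof -
  have "{e\<in>E. gx i \<in> e \<and> table_coloring L1 e = table_coloring L2 e}
      = (\<lambda>j. {gx i, gy j}) ` {j. j < n \<and> M i j \<and> L1 i j = L2 i j}"
    using i gx_eq_iff gx_neq_gy edge_iff table_coloring_edge by (fastforce elim!: edgeE)
  moreover have "inj_on (\<lambda>j. {gx i, gy j}) {j. j < n \<and> M i j \<and> L1 i j = L2 i j}"
    using i edge_eq_iff by (auto intro!: inj_onI)
  ultimately show ?thesis
    unfolding agreement_degree_def by (simp add: card_image)
qed

lemma agreement_degree_col:
  assumes j: "j < n"
  shows "agreement_degree E (table_coloring L1) (table_coloring L2) (gy j)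
    = card {i. i < n \<and> M i j \<and> L1 i j = L2 i j}"
proof -
  have "{e\<in>E. gy j \<in> e \<and> table_coloring L1 e = table_coloring L2 e}
      = (\<lambda>i. {gx i, gy j}) ` {i. i < n \<and> M i j \<and> L1 i j = L2 i j}"
    using j gy_eq_iff gx_neq_gy edge_iff table_coloring_edge by (fastforce elim!: edgeE)
  moreover have "inj_on (\<lambda>i. {gx i, gy j}) {i. i < n \<and> M i j \<and> L1 i j = L2 i j}"
    using j edge_eq_iff by (auto intro!: inj_onI)
  ultimately show ?thesis
    unfolding agreement_degree_def by (simp add: card_image)
qed

lemma card_lone_agreements_table:
  "card (lone_agreements V E (table_coloring L1) (table_coloring L2)) = lone_matches n M L1 L2"
proof -
  define A where "A = {i. i < n \<and> card {j. j < n \<and> M i j \<and> L1 i j = L2 i j} = 1}"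
  define B where "B = {j. j < n \<and> card {i. i < n \<and> M i j \<and> L1 i j = L2 i j} = 1}"
  have "lone_agreements V E (table_coloring L1) (table_coloring L2) = gx ` A \<union> gy ` B"
    unfolding lone_agreements_def vertices A_def B_def
    using agreement_degree_row agreement_degree_col by auto
  moreover have "A \<subseteq> {..<n}" "B \<subseteq> {..<n}" unfolding A_def B_def by auto
  then have "finite A" "finite B" by (auto intro: finite_subset)
  with \<open>A \<subseteq> {..<n}\<close> \<open>B \<subseteq> {..<n}\<close>
  have "card (gx ` A \<union> gy ` B) = card A + card B"
    using gx_eq_iff gy_eq_iff gx_neq_gy
    by (subst card_Un_disjoint) (auto simp: card_image inj_on_def subset_iff)
  ultimately show ?thesis
    unfolding lone_matches_def A_def B_def by simp
qed

lemma is_simple_graph: "simple_graph V E"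
  unfolding simple_graph_def
proof (intro conjI ballI)
  show "finite V" unfolding vertices by simp
next
  fix e assume "e \<in> E"
  then obtain i j where "i < n" "j < n" "e = {gx i, gy j}" by (rule edgeE)
  then show "e \<subseteq> V" "card e = 2"
    unfolding vertices using gx_neq_gy by auto
qed

lemma edge_kempe_classes3_gt1_by_tables:
  assumes "cubic V E" and "latin_table n M L1" "latin_table n M L2"
    and "odd (lone_matches n M L2 L1)"
  shows "edge_kempe_classes3 E > 1"
proof -
  interpret cubic_graph V E using is_simple_graph assms(1) by unfold_locales
  show ?thesis
    using edge_kempe_classes3_gt1 table_coloring_in_edge_colorings3 assms(2-4)
      card_lone_agreements_table by metis
qed

end

section \<open>The colour tables\<close>

lemma all_less_five: "(\<forall>i<(5::nat). P i) \<longleftrightarrow> P 0 \<and> P 1 \<and> P 2 \<and> P 3 \<and> P 4"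
  by (auto simp: less_Suc_eq numeral_eq_Suc)

lemma card_less_filter: "card {j. j < n \<and> P j} = length (filter P [0..<n])"
proof -
  have "{j. j < n \<and> P j} = set (filter P [0..<n])" by auto
  then show ?thesis using distinct_card[of "filter P [0..<n]"] by simp
qed

definition latin_K33_1 :: "nat \<Rightarrow> nat \<Rightarrow> nat" where
  "latin_K33_1 i j = [[1,2,3],[2,3,1],[3,1,2]] ! i ! j"

definition latin_K33_2 :: "nat \<Rightarrow> nat \<Rightarrow> nat" where
  "latin_K33_2 i j = [[1,2,3],[3,1,2],[2,3,1]] ! i ! j"

lemma latin_K33: "latin_table 3 (\<lambda>_ _. True) latin_K33_1" "latin_table 3 (\<lambda>_ _. True) latin_K33_2"
  unfolding latin_table_def latin_K33_1_def latin_K33_2_def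
  by (simp_all add: All_less_Suc numeral_eq_Suc)

lemma lone_matches_K33: "odd (lone_matches 3 (\<lambda>_ _. True) latin_K33_2 latin_K33_1)"
  unfolding lone_matches_def card_less_filter latin_K33_1_def latin_K33_2_def
  by (simp add: upt_rec)

text \<open>\<open>K\<^sub>5\<^sub>,\<^sub>5\<close> minus a 10-cycle.\<close>

definition co_C10 :: "nat \<Rightarrow> nat \<Rightarrow> bool" where
  "co_C10 i j \<longleftrightarrow> j \<noteq> i \<and> j \<noteq> (i + 1) mod 5"

definition latin_co_C10_1 :: "nat \<Rightarrow> nat \<Rightarrow> nat" where
  "latin_co_C10_1 i j = [[0,0,1,2,3],[1,0,0,3,2],[2,3,0,0,1],[3,1,2,0,0],[0,2,3,1,0]] ! i ! j"

definition latin_co_C10_2 :: "nat \<Rightarrow> nat \<Rightarrow> nat" where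
  "latin_co_C10_2 i j = [[0,0,1,2,3],[3,0,0,1,2],[2,3,0,0,1],[1,2,3,0,0],[0,1,2,3,0]] ! i ! j"

lemma latin_co_C10: "latin_table 5 co_C10 latin_co_C10_1" "latin_table 5 co_C10 latin_co_C10_2"
  unfolding latin_table_def latin_co_C10_1_def latin_co_C10_2_def co_C10_def all_less_five
  by simp_all

lemma lone_matches_co_C10: "odd (lone_matches 5 co_C10 latin_co_C10_2 latin_co_C10_1)"
  unfolding lone_matches_def card_less_filter latin_co_C10_1_def latin_co_C10_2_def co_C10_def
  by (simp add: upt_rec)

text \<open>\<open>K\<^sub>5\<^sub>,\<^sub>5\<close> minus a 4-cycle and a 6-cycle; the two lists give the two columns missed by each row.\<close>

definition co_C4_C6 :: "nat \<Rightarrow> nat \<Rightarrow> bool" where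
  "co_C4_C6 i j \<longleftrightarrow> j \<notin> {[0,0,2,3,4] ! i, [1,1,3,4,2] ! i}"

definition latin_co_C4_C6_1 :: "nat \<Rightarrow> nat \<Rightarrow> nat" where
  "latin_co_C4_C6_1 i j = [[0,0,1,2,3],[0,0,2,3,1],[1,3,0,0,2],[2,1,3,0,0],[3,2,0,1,0]] ! i ! j"

definition latin_co_C4_C6_2 :: "nat \<Rightarrow> nat \<Rightarrow> nat" where
  "latin_co_C4_C6_2 i j = [[0,0,1,2,3],[0,0,2,3,1],[3,1,0,0,2],[1,2,3,0,0],[2,3,0,1,0]] ! i ! j"

lemma latin_co_C4_C6:
  "latin_table 5 co_C4_C6 latin_co_C4_C6_1" "latin_table 5 co_C4_C6 latin_co_C4_C6_2"
  unfolding latin_table_def latin_co_C4_C6_1_def latin_co_C4_C6_2_def co_C4_C6_def all_less_five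
  by simp_all

lemma lone_matches_co_C4_C6: "odd (lone_matches 5 co_C4_C6 latin_co_C4_C6_2 latin_co_C4_C6_1)"
  unfolding lone_matches_def card_less_filter latin_co_C4_C6_1_def latin_co_C4_C6_2_def co_C4_C6_def
  by (simp add: upt_rec)

section \<open>A plane drawing of the cube\<close>

text \<open>Two nested squares: \<open>x\<^sub>0 y\<^sub>2 x\<^sub>1 y\<^sub>3\<close> outside and \<open>y\<^sub>1 x\<^sub>2 y\<^sub>0 x\<^sub>3\<close> inside, with \<open>x\<^sub>i y\<^sub>j\<close> an edge iff \<open>i \<noteq> j\<close>.\<close>

definition cube_point_x :: "nat \<Rightarrow> complex" where
  "cube_point_x i = [Complex (-3) (-3), Complex 3 3, Complex 1 (-1), Complex (-1) 1] ! i"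

definition cube_point_y :: "nat \<Rightarrow> complex" where
  "cube_point_y j = [Complex 1 1, Complex (-1) (-1), Complex (-3) 3, Complex 3 (-3)] ! j"

lemma all_less_four: "(\<forall>i<(4::nat). P i) \<longleftrightarrow> P 0 \<and> P 1 \<and> P 2 \<and> P 3"
  by (auto simp: less_Suc_eq numeral_eq_Suc)

lemma linepath_neqI:
  assumes "(1-t) * Re a + t * Re b = (1-s) * Re c + s * Re d \<Longrightarrow>
      (1-t) * Im a + t * Im b = (1-s) * Im c + s * Im d \<Longrightarrow> False"
  shows "linepath a b t \<noteq> linepath c d s"
  using assms by (auto simp: linepath_def complex_eq_iff)

lemma linepath_neq_pointI:
  assumes "(1-t) * Re a + t * Re b = Re c \<Longrightarrow> (1-t) * Im a + t * Im b = Im c \<Longrightarrow> False"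
  shows "linepath a b t \<noteq> c"
  using assms by (auto simp: linepath_def complex_eq_iff)

lemma cube_points_distinct:
  "\<forall>i<4. \<forall>k<4. (cube_point_x i = cube_point_x k \<longrightarrow> i = k) \<and>
     (cube_point_y i = cube_point_y k \<longrightarrow> i = k) \<and> cube_point_x i \<noteq> cube_point_y k"
  unfolding all_less_four by (simp add: cube_point_x_def cube_point_y_def complex_eq_iff)

lemma cube_segments_avoid_points:
  "\<forall>i<4. \<forall>j<4. \<forall>k<4. i \<noteq> j \<longrightarrow> (\<forall>t. 0 < t \<longrightarrow> t < 1 \<longrightarrow>
     linepath (cube_point_x i) (cube_point_y j) t \<noteq> cube_point_x k \<and>
     linepath (cube_point_x i) (cube_point_y j) t \<noteq> cube_point_y k)"
  unfolding all_less_four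
  by (intro conjI impI allI; rule linepath_neq_pointI;
      simp add: cube_point_x_def cube_point_y_def; linarith)

lemma cube_segments_disjoint:
  "\<forall>i<4. \<forall>j<4. \<forall>k<4. \<forall>l<4. i \<noteq> j \<longrightarrow> k \<noteq> l \<longrightarrow> (i \<noteq> k \<or> j \<noteq> l) \<longrightarrow>
     (\<forall>t s. 0 < t \<longrightarrow> t < 1 \<longrightarrow> 0 \<le> s \<longrightarrow> s \<le> 1 \<longrightarrow>
        linepath (cube_point_x i) (cube_point_y j) t \<noteq> linepath (cube_point_x k) (cube_point_y l) s)"
  unfolding all_less_four
  by (intro conjI impI allI; rule linepath_neqI;
      simp add: cube_point_x_def cube_point_y_def; linarith)

context biadjacency
begin

definition cube_vertex_point :: "'a \<Rightarrow> complex" where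
  "cube_vertex_point v = (if v \<in> X then cube_point_x (inv_into {..<n} gx v)
                                    else cube_point_y (inv_into {..<n} gy v))"

definition cube_edge_path :: "'a set \<Rightarrow> real \<Rightarrow> complex" where
  "cube_edge_path e = linepath (cube_point_x (THE i. i < n \<and> gx i \<in> e))
                               (cube_point_y (THE j. j < n \<and> gy j \<in> e))"

lemma cube_vertex_point_gx: "i < n \<Longrightarrow> cube_vertex_point (gx i) = cube_point_x i"
  and cube_vertex_point_gy: "j < n \<Longrightarrow> cube_vertex_point (gy j) = cube_point_y j"
  using bij_gx bij_gy unfolding cube_vertex_point_def by (auto simp: bij_betw_def inv_into_f_f)

lemma cube_edge_path_edge:
  "i < n \<Longrightarrow> j < n \<Longrightarrow> cube_edge_path {gx i, gy j} = linepath (cube_point_x i) (cube_point_y j)"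
  unfolding cube_edge_path_def using row_index col_index by simp

lemma planar_cube:
  assumes n: "n = 4" and M: "M = (\<lambda>i j. i \<noteq> j)"
  shows "planar V E"
proof -
  let ?p = cube_vertex_point and ?\<gamma> = cube_edge_path
  note px = cube_vertex_point_gx and py = cube_vertex_point_gy and \<gamma> = cube_edge_path_edge
  have edge: "\<exists>i<n. \<exists>j<n. i \<noteq> j \<and> e = {gx i, gy j}" if "e \<in> E" for e
    using edgeE[OF that] M by metis
  have pV: "?p ` V = cube_point_x ` {..<4} \<union> cube_point_y ` {..<4}"
    unfolding vertices image_Un image_image using px py n by simp
  have "inj_on ?p V"
  proof (rule inj_onI)
    fix u w assume "u \<in> V" "w \<in> V" "?p u = ?p w"
    then show "u = w"
      unfolding vertices using px py cube_points_distinct n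
      by (elim UnE imageE) (simp_all, metis+)
  qed
  moreover have "arc (?\<gamma> e) \<and> {pathstart (?\<gamma> e), pathfinish (?\<gamma> e)} = ?p ` e" if "e \<in> E" for e
    using edge[OF that] \<gamma> px py cube_points_distinct n by (auto simp: arc_linepath)
  moreover have "?\<gamma> e ` {0<..<1} \<inter> ?p ` V = {}" if "e \<in> E" for e
    using edge[OF that] \<gamma> cube_segments_avoid_points n unfolding pV by fastforce
  moreover have "?\<gamma> e ` {0<..<1} \<inter> ?\<gamma> f ` {0..1} = {}" if ef: "e \<in> E" "f \<in> E" "e \<noteq> f" for e f
  proof -
    obtain i j where ij: "i < n" "j < n" "i \<noteq> j" "e = {gx i, gy j}" using edge[OF ef(1)] by blast
    obtain k l where kl: "k < n" "l < n" "k \<noteq> l" "f = {gx k, gy l}" using edge[OF ef(2)] by blast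
    have "i \<noteq> k \<or> j \<noteq> l" using ij kl ef(3) by auto
    then show ?thesis
      using ij kl \<gamma> cube_segments_disjoint n by (fastforce simp: disjoint_iff)
  qed
  ultimately show ?thesis
    unfolding planar_def by blast
qed

end

definition has_biadjacency ::
  "'a set \<Rightarrow> 'a set \<Rightarrow> ('a \<Rightarrow> 'a \<Rightarrow> bool) \<Rightarrow> nat \<Rightarrow> (nat \<Rightarrow> nat \<Rightarrow> bool) \<Rightarrow> bool" where
  "has_biadjacency X Y R n M \<longleftrightarrow> (\<exists>gx gy. bij_betw gx {..<n} X \<and> bij_betw gy {..<n} Y \<and>
     (\<forall>i<n. \<forall>j<n. R (gx i) (gy j) \<longleftrightarrow> M i j))"

lemma has_biadjacency_complete:
  assumes "finite X" "finite Y" "card X = n" "card Y = n" and "\<And>x y. x \<in> X \<Longrightarrow> y \<in> Y \<Longrightarrow> R x y"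
  shows "has_biadjacency X Y R n (\<lambda>_ _. True)"
proof -
  obtain gx gy where "bij_betw gx {..<n} X" "bij_betw gy {..<n} Y"
    using ex_bij_betw_nat_finite assms(1-4) lessThan_atLeast0 by metis
  then show ?thesis
    unfolding has_biadjacency_def using assms(5) by (blast dest: bij_betwE)
qed

lemma unique_gaps_bij:
  assumes fin: "finite X" "finite Y" and card: "card X = card Y"
    and gap_x: "\<And>x. x \<in> X \<Longrightarrow> card {y\<in>Y. \<not> R x y} = 1"
    and gap_y: "\<And>y. y \<in> Y \<Longrightarrow> card {x\<in>X. \<not> R x y} = 1"
  obtains m where "bij_betw m X Y" "\<And>x. x \<in> X \<Longrightarrow> {y\<in>Y. \<not> R x y} = {m x}"
proof -
  define m where "m x = (THE y. y \<in> Y \<and> \<not> R x y)" for x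
  have gap: "{y\<in>Y. \<not> R x y} = {m x}" if x: "x \<in> X" for x
  proof -
    obtain a where a: "{y\<in>Y. \<not> R x y} = {a}"
      using gap_x[OF x] card_1_singletonE by blast
    then have "m x = a" unfolding m_def by (intro the_equality) blast+
    with a show ?thesis by simp
  qed
  have "inj_on m X"
  proof (rule inj_onI)
    fix x x' assume x: "x \<in> X" "x' \<in> X" and eq: "m x = m x'"
    have "m x \<in> Y" using gap[OF x(1)] by blast
    have "{x, x'} \<subseteq> {z\<in>X. \<not> R z (m x)}"
      using gap[OF x(1)] gap[OF x(2)] x eq by blast
    then have "card {x, x'} \<le> card {z\<in>X. \<not> R z (m x)}"
      using fin(1) by (intro card_mono) auto
    then show "x = x'"
      using gap_y[OF \<open>m x \<in> Y\<close>] by (cases "x = x'") simp_all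
  qed
  moreover have "m ` X \<subseteq> Y" using gap by blast
  ultimately have "bij_betw m X Y"
    unfolding bij_betw_def using card fin by (simp add: card_image card_subset_eq)
  then show ?thesis using gap by (rule that)
qed

lemma has_biadjacency_one_gap:
  assumes fin: "finite X" "finite Y" and card: "card X = n" "card Y = n"
    and gap_x: "\<And>x. x \<in> X \<Longrightarrow> card {y\<in>Y. \<not> R x y} = 1"
    and gap_y: "\<And>y. y \<in> Y \<Longrightarrow> card {x\<in>X. \<not> R x y} = 1"
  shows "has_biadjacency X Y R n (\<lambda>i j. i \<noteq> j)"
proof -
  obtain m where m: "bij_betw m X Y" and gap: "\<And>x. x \<in> X \<Longrightarrow> {y\<in>Y. \<not> R x y} = {m x}"
    using unique_gaps_bij[OF fin _ gap_x gap_y] card by metis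
  obtain gx where gx: "bij_betw gx {..<n} X"
    using ex_bij_betw_nat_finite[OF fin(1)] card(1) lessThan_atLeast0 by metis
  have "R (gx i) (m (gx j)) \<longleftrightarrow> i \<noteq> j" if ij: "i < n" "j < n" for i j
  proof -
    have "gx i \<in> X" "gx j \<in> X" using bij_betwE[OF gx] ij by auto
    then have "\<not> R (gx i) (m (gx j)) \<longleftrightarrow> m (gx j) = m (gx i)"
      using gap[of "gx i"] bij_betwE[OF m] by blast
    moreover have "m (gx j) = m (gx i) \<longleftrightarrow> j = i"
      using bij_betw_imp_inj_on[OF bij_betw_trans[OF gx m]] ij unfolding inj_on_def by auto
    ultimately show ?thesis by auto
  qed
  then show ?thesis
    unfolding has_biadjacency_def using gx bij_betw_trans[OF gx m] by (auto simp: comp_def)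
qed

lemma card_2_other:
  assumes "card A = 2" "a \<in> A"
  obtains b where "b \<noteq> a" "A = {a, b}"
proof -
  obtain u w where "A = {u, w}" "u \<noteq> w" using assms(1) card_2_iff by metis
  then show ?thesis
    using that[of w] that[of u] assms(2) by (auto simp: insert_commute)
qed

lemma card_2_eqI:
  assumes "card A = 2" "a \<in> A" "b \<in> A" "a \<noteq> b"
  shows "A = {a, b}"
proof -
  have "finite A" using assms(1) by (intro card_ge_0_finite) simp
  then show ?thesis using assms by (intro card_subset_eq[symmetric]) auto
qed

lemma has_biadjacency_from_gap_lists:
  assumes xs: "distinct xs" "set xs \<subseteq> X" "length xs = n" "card X = n" "finite X"
    and ys: "distinct ys" "set ys \<subseteq> Y" "length ys = n" "card Y = n" "finite Y"
    and S: "\<forall>i<n. {y\<in>Y. \<not> R (xs ! i) y} = (!) ys ` S i"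
    and S_bound: "\<forall>i<n. S i \<subseteq> {..<n}"
  shows "has_biadjacency X Y R n (\<lambda>i j. j \<notin> S i)"
proof -
  have "set xs = X" "set ys = Y"
    using xs ys by (simp_all add: card_subset_eq distinct_card)
  then have gx: "bij_betw ((!) xs) {..<n} X" and gy: "bij_betw ((!) ys) {..<n} Y"
    using xs(1,3) ys(1,3) by (simp_all add: bij_betw_nth)
  have "R (xs ! i) (ys ! j) \<longleftrightarrow> j \<notin> S i" if "i < n" "j < n" for i j
  proof -
    have "\<not> R (xs ! i) (ys ! j) \<longleftrightarrow> ys ! j \<in> (!) ys ` S i"
      using S[rule_format, OF that(1)] bij_betwE[OF gy] that(2) by blast
    also have "\<dots> \<longleftrightarrow> j \<in> S i"
      using bij_betw_imp_inj_on[OF gy] S_bound[rule_format, OF that(1)] that(2)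
      by (auto simp: inj_on_def subset_iff)
    finally show ?thesis by blast
  qed
  then show ?thesis
    unfolding has_biadjacency_def using gx gy by (intro exI[of _ "(!) xs"] exI[of _ "(!) ys"]) blast
qed

text \<open>
  Walking along
  gaps alternately through rows and columns closes a 4-, 6- or 10-cycle; an 8-cycle would leave
  the fifth row too few columns for its two gaps.
\<close>

locale two_gaps =
  fixes X Y :: "'a set" and R :: "'a \<Rightarrow> 'a \<Rightarrow> bool"
  assumes finite_X: "finite X" and finite_Y: "finite Y"
    and card_X: "card X = 5" and card_Y: "card Y = 5"
    and two_gaps_row: "\<And>x. x \<in> X \<Longrightarrow> card {y\<in>Y. \<not> R x y} = 2"
    and two_gaps_col: "\<And>y. y \<in> Y \<Longrightarrow> card {x\<in>X. \<not> R x y} = 2"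
begin

definition row_gaps :: "'a \<Rightarrow> 'a set" where "row_gaps x = {y\<in>Y. \<not> R x y}"
definition col_gaps :: "'a \<Rightarrow> 'a set" where "col_gaps y = {x\<in>X. \<not> R x y}"

lemma card_row_gaps: "x \<in> X \<Longrightarrow> card (row_gaps x) = 2"
  and card_col_gaps: "y \<in> Y \<Longrightarrow> card (col_gaps y) = 2"
  unfolding row_gaps_def col_gaps_def using two_gaps_row two_gaps_col by auto

lemma row_gaps_iff: "x \<in> X \<Longrightarrow> y \<in> row_gaps x \<longleftrightarrow> y \<in> Y \<and> x \<in> col_gaps y"
  and col_gaps_iff: "y \<in> Y \<Longrightarrow> x \<in> col_gaps y \<longleftrightarrow> x \<in> X \<and> y \<in> row_gaps x"
  unfolding row_gaps_def col_gaps_def by auto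

lemma row_gaps_other:
  assumes "x \<in> X" "y \<in> row_gaps x"
  obtains y' where "y' \<noteq> y" "row_gaps x = {y, y'}" "y' \<in> Y" "x \<in> col_gaps y'"
proof -
  obtain y' where y': "y' \<noteq> y" "row_gaps x = {y, y'}"
    by (rule card_2_other[OF card_row_gaps[OF assms(1)] assms(2)])
  then have "y' \<in> Y" "x \<in> col_gaps y'" using row_gaps_iff[OF assms(1), of y'] by auto
  with y' show ?thesis by (rule that)
qed

lemma col_gaps_other:
  assumes "y \<in> Y" "x \<in> col_gaps y"
  obtains x' where "x' \<noteq> x" "col_gaps y = {x, x'}" "x' \<in> X" "y \<in> row_gaps x'"
proof -
  obtain x' where x': "x' \<noteq> x" "col_gaps y = {x, x'}"
    by (rule card_2_other[OF card_col_gaps[OF assms(1)] assms(2)])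
  then have "x' \<in> X" "y \<in> row_gaps x'" using col_gaps_iff[OF assms(1), of x'] by auto
  with x' show ?thesis by (rule that)
qed

lemma exists_outside:
  assumes "finite A" "card A < 5"
  obtains x where "x \<in> X" "x \<notin> A"
proof -
  have "\<not> X \<subseteq> A" using assms card_X card_mono[OF assms(1), of X] by linarith
  then show ?thesis using that by blast
qed

lemma row_gaps_avoid_closed:
  assumes "\<And>y. y \<in> B \<Longrightarrow> col_gaps y \<subseteq> A" "x \<in> X" "x \<notin> A"
  shows "row_gaps x \<subseteq> Y - B"
  using assms row_gaps_iff by blast

lemma card_Y_diff: "B \<subseteq> Y \<Longrightarrow> card (Y - B) = 5 - card B"
  using card_Y card_Diff_subset[OF finite_subset[OF _ finite_Y]] by simp

lemma no_closed_four:
  assumes "A \<subseteq> X" "card A = 4" "B \<subseteq> Y" "card B = 4" "\<And>y. y \<in> B \<Longrightarrow> col_gaps y \<subseteq> A"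
  shows False
proof -
  have "finite A" using assms(1) finite_X finite_subset by blast
  then obtain x where x: "x \<in> X" "x \<notin> A"
    by (rule exists_outside) (simp add: assms(2))
  have "card (row_gaps x) \<le> card (Y - B)"
    using row_gaps_avoid_closed[OF assms(5) x] finite_Y by (intro card_mono) auto
  then show False
    using card_row_gaps[OF x(1)] card_Y_diff[OF assms(3)] assms(4) by simp
qed

lemma closed_three:
  assumes "A \<subseteq> X" "card A = 3" "B \<subseteq> Y" "card B = 3" "\<And>y. y \<in> B \<Longrightarrow> col_gaps y \<subseteq> A"
    and "x \<in> X" "x \<notin> A"
  shows "row_gaps x = Y - B"
proof (rule card_subset_eq)
  show "finite (Y - B)" using finite_Y by simp
  show "row_gaps x \<subseteq> Y - B" by (rule row_gaps_avoid_closed[OF assms(5-7)])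
  show "card (row_gaps x) = card (Y - B)"
    using card_row_gaps[OF assms(6)] card_Y_diff[OF assms(3)] assms(4) by simp
qed

lemma co_C4_C6_from_rows:
  assumes "distinct [x0, x1, x2, x3, x4]" "set [x0, x1, x2, x3, x4] \<subseteq> X"
    and "distinct [y0, y1, y2, y3, y4]" "set [y0, y1, y2, y3, y4] \<subseteq> Y"
    and "row_gaps x0 = {y0, y1}" "row_gaps x1 = {y0, y1}" "row_gaps x2 = {y2, y3}"
      "row_gaps x3 = {y3, y4}" "row_gaps x4 = {y4, y2}"
  shows "has_biadjacency X Y R 5 co_C4_C6"
proof -
  have "has_biadjacency X Y R 5 (\<lambda>i j. j \<notin> {[0,0,2,3,4] ! i, [1,1,3,4,2] ! i})"
    using assms finite_X finite_Y card_X card_Y unfolding row_gaps_def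
    by (intro has_biadjacency_from_gap_lists[where xs = "[x0, x1, x2, x3, x4]" and ys = "[y0, y1, y2, y3, y4]"])
      (simp_all add: all_less_five)
  then show ?thesis unfolding co_C4_C6_def .
qed

lemma co_C10_from_rows:
  assumes "distinct [x0, x1, x2, x3, x4]" "set [x0, x1, x2, x3, x4] \<subseteq> X"
    and "distinct [y0, y1, y2, y3, y4]" "set [y0, y1, y2, y3, y4] \<subseteq> Y"
    and "row_gaps x0 = {y0, y1}" "row_gaps x1 = {y1, y2}" "row_gaps x2 = {y2, y3}"
      "row_gaps x3 = {y3, y4}" "row_gaps x4 = {y4, y0}"
  shows "has_biadjacency X Y R 5 co_C10"
proof -
  have "has_biadjacency X Y R 5 (\<lambda>i j. j \<notin> {i, (i + 1) mod 5})"
    using assms finite_X finite_Y card_X card_Y unfolding row_gaps_def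
    by (intro has_biadjacency_from_gap_lists[where xs = "[x0, x1, x2, x3, x4]" and ys = "[y0, y1, y2, y3, y4]"])
      (simp_all add: all_less_five)
  then show ?thesis unfolding co_C10_def by simp
qed

lemma set_eq_Y: "distinct ys \<Longrightarrow> length ys = 5 \<Longrightarrow> set ys \<subseteq> Y \<Longrightarrow> set ys = Y"
  using card_Y finite_Y by (intro card_subset_eq) (simp_all add: distinct_card)

lemma row_gaps_subset: "x \<in> X \<Longrightarrow> row_gaps x \<subseteq> Y"
  unfolding row_gaps_def by blast

lemma col_gaps_eqI: "y \<in> Y \<Longrightarrow> x \<in> X \<Longrightarrow> x' \<in> X \<Longrightarrow> x \<noteq> x' \<Longrightarrow>
    y \<in> row_gaps x \<Longrightarrow> y \<in> row_gaps x' \<Longrightarrow> col_gaps y = {x, x'}"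
  using card_2_eqI[OF card_col_gaps] col_gaps_iff by metis

lemma twin_rows:
  assumes x01: "x0 \<in> X" "x1 \<in> X" "x0 \<noteq> x1" and y01: "y0 \<noteq> y1"
    and rows: "row_gaps x0 = {y0, y1}" "row_gaps x1 = {y0, y1}"
  shows "has_biadjacency X Y R 5 co_C4_C6"
proof -
  have y0: "y0 \<in> Y" and y1: "y1 \<in> Y" using row_gaps_subset[OF x01(1)] rows(1) by auto
  have cols: "col_gaps y0 = {x0, x1}" "col_gaps y1 = {x0, x1}"
    using col_gaps_eqI x01 y0 y1 rows by auto
  obtain x2 where x2: "x2 \<in> X" "x2 \<notin> {x0, x1}"
    by (rule exists_outside[of "{x0, x1}"]) (simp_all add: card_insert_if)
  obtain y2 where y2: "y2 \<in> row_gaps x2"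
    using card_row_gaps[OF x2(1)] by (metis card.empty ex_in_conv zero_neq_numeral)
  obtain y3 where y3: "y3 \<noteq> y2" "row_gaps x2 = {y2, y3}" "y3 \<in> Y" "x2 \<in> col_gaps y3"
    by (rule row_gaps_other[OF x2(1) y2])
  have y2': "y2 \<in> Y" "x2 \<in> col_gaps y2" using row_gaps_iff[OF x2(1)] y2 by auto
  have y23: "y2 \<notin> {y0, y1}" "y3 \<notin> {y0, y1}" using cols x2(2) y2' y3(4) by auto
  obtain x3 where x3: "x3 \<noteq> x2" "col_gaps y3 = {x2, x3}" "x3 \<in> X" "y3 \<in> row_gaps x3"
    by (rule col_gaps_other[OF y3(3,4)])
  have x3': "x3 \<notin> {x0, x1}" using rows x3(4) y23 by auto
  obtain y4 where y4: "y4 \<noteq> y3" "row_gaps x3 = {y3, y4}" "y4 \<in> Y" "x3 \<in> col_gaps y4"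
    by (rule row_gaps_other[OF x3(3,4)])
  have y4': "y4 \<notin> {y0, y1}" using cols y4(4) x3' by auto
  have "y4 \<noteq> y2"
  proof
    assume "y4 = y2"
    then have "col_gaps y2 = {x2, x3}"
      using col_gaps_eqI[OF y2'(1) x2(1) x3(3)] x3(1) y2 y4(2) by auto
    then have "col_gaps y \<subseteq> {x0, x1, x2, x3}" if "y \<in> {y0, y1, y2, y3}" for y
      using that cols x3(2) by auto
    moreover have "card {x0, x1, x2, x3} = 4" "card {y0, y1, y2, y3} = 4"
      using x01 x2 x3 x3' y01 y23 y3(1) by (auto simp: card_insert_if)
    ultimately show False
      using no_closed_four[of "{x0, x1, x2, x3}" "{y0, y1, y2, y3}"] x01 x2 x3 y0 y1 y2' y3 by auto
  qed
  obtain x4 where x4: "x4 \<noteq> x3" "col_gaps y4 = {x3, x4}" "x4 \<in> X" "y4 \<in> row_gaps x4"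
    by (rule col_gaps_other[OF y4(3,4)])
  have x4': "x4 \<notin> {x0, x1, x2}" using rows y3(2) x4(4) y4' y4(1) \<open>y4 \<noteq> y2\<close> by auto
  obtain z where z: "z \<noteq> y4" "row_gaps x4 = {y4, z}" "z \<in> Y" "x4 \<in> col_gaps z"
    by (rule row_gaps_other[OF x4(3,4)])
  have ys: "distinct [y0, y1, y2, y3, y4]" "set [y0, y1, y2, y3, y4] \<subseteq> Y"
    using y01 y23 y3 y4 y4' \<open>y4 \<noteq> y2\<close> y0 y1 y2' by auto
  then have "z \<in> {y0, y1, y2, y3, y4}" using set_eq_Y z(3) by fastforce
  then have "row_gaps x4 = {y4, y2}" using z cols x3(2) x4(1) x4' by auto
  moreover have "distinct [x0, x1, x2, x3, x4]" "set [x0, x1, x2, x3, x4] \<subseteq> X"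
    using x01 x2 x3 x3' x4 x4' by auto
  ultimately show ?thesis
    using co_C4_C6_from_rows ys rows y3(2) y4(2) by blast
qed

lemma hexagon_rows:
  assumes xs: "x0 \<in> X" "x1 \<in> X" "x2 \<in> X" "distinct [x0, x1, x2]"
    and ys: "y0 \<in> Y" "y1 \<in> Y" "y2 \<in> Y" "distinct [y0, y1, y2]"
    and rows: "row_gaps x0 = {y0, y1}" "row_gaps x1 = {y1, y2}" "row_gaps x2 = {y2, y0}"
  shows "has_biadjacency X Y R 5 co_C4_C6"
proof -
  have "col_gaps y0 = {x0, x2}" "col_gaps y1 = {x0, x1}" "col_gaps y2 = {x1, x2}"
    using col_gaps_eqI xs ys rows by auto
  then have closed: "col_gaps y \<subseteq> {x0, x1, x2}" if "y \<in> {y0, y1, y2}" for y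
    using that by auto
  have card3: "card {x0, x1, x2} = 3" "card {y0, y1, y2} = 3"
    using xs(4) ys(4) by (auto simp: card_insert_if)
  obtain x3 where x3: "x3 \<in> X" "x3 \<notin> {x0, x1, x2}"
    by (rule exists_outside[of "{x0, x1, x2}"]) (simp_all add: card3)
  obtain x4 where x4: "x4 \<in> X" "x4 \<notin> {x0, x1, x2, x3}"
    by (rule exists_outside[of "{x0, x1, x2, x3}"]) (use card3 x3 in \<open>simp_all add: card_insert_if\<close>)
  have "row_gaps x3 = Y - {y0, y1, y2}" "row_gaps x4 = Y - {y0, y1, y2}"
    using closed_three[OF _ card3(1) _ card3(2) closed] xs ys x3 x4 by auto
  moreover have "card (Y - {y0, y1, y2}) = 2"
    using card_Y_diff[of "{y0, y1, y2}"] card3(2) ys by simp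
  then obtain u w where "u \<noteq> w" "Y - {y0, y1, y2} = {u, w}"
    by (meson card_2_iff)
  ultimately show ?thesis
    using twin_rows x3 x4 by auto
qed

lemma decagon_rows:
  assumes xs: "x0 \<in> X" "x1 \<in> X" "x2 \<in> X" "distinct [x0, x1, x2]"
    and ys: "y0 \<in> Y" "y1 \<in> Y" "y2 \<in> Y" "y3 \<in> Y" "distinct [y0, y1, y2, y3]"
    and rows: "row_gaps x0 = {y0, y1}" "row_gaps x1 = {y1, y2}" "row_gaps x2 = {y2, y3}"
  shows "has_biadjacency X Y R 5 co_C10"
proof -
  have cols: "col_gaps y1 = {x0, x1}" "col_gaps y2 = {x1, x2}"
    using col_gaps_eqI xs ys rows by auto
  have "x2 \<in> col_gaps y3" using col_gaps_iff xs ys rows by auto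
  then obtain x3 where x3: "x3 \<noteq> x2" "col_gaps y3 = {x2, x3}" "x3 \<in> X" "y3 \<in> row_gaps x3"
    by (rule col_gaps_other[OF ys(4)])
  have x3': "x3 \<notin> {x0, x1, x2}" using rows x3(1,4) ys(5) by auto
  obtain y4 where y4: "y4 \<noteq> y3" "row_gaps x3 = {y3, y4}" "y4 \<in> Y" "x3 \<in> col_gaps y4"
    by (rule row_gaps_other[OF x3(3,4)])
  have y4': "y4 \<notin> {y1, y2, y3}" using cols y4 x3' by auto
  have "y4 \<noteq> y0"
  proof
    assume "y4 = y0"
    then have "col_gaps y0 = {x0, x3}" using col_gaps_eqI xs ys x3 x3' y4 rows by auto
    then have "col_gaps y \<subseteq> {x0, x1, x2, x3}" if "y \<in> {y0, y1, y2, y3}" for y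
      using that cols x3(2) by auto
    moreover have "card {x0, x1, x2, x3} = 4" "card {y0, y1, y2, y3} = 4"
      using xs(4) x3' ys(5) by (auto simp: card_insert_if)
    ultimately show False
      using no_closed_four[of "{x0, x1, x2, x3}" "{y0, y1, y2, y3}"] xs ys x3 by auto
  qed
  obtain x4 where x4: "x4 \<noteq> x3" "col_gaps y4 = {x3, x4}" "x4 \<in> X" "y4 \<in> row_gaps x4"
    by (rule col_gaps_other[OF y4(3,4)])
  have x4': "x4 \<notin> {x0, x1, x2}" using rows x4(4) y4' \<open>y4 \<noteq> y0\<close> by auto
  obtain z where z: "z \<noteq> y4" "row_gaps x4 = {y4, z}" "z \<in> Y" "x4 \<in> col_gaps z"
    by (rule row_gaps_other[OF x4(3,4)])
  have ys': "distinct [y0, y1, y2, y3, y4]" "set [y0, y1, y2, y3, y4] \<subseteq> Y"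
    using ys y4 y4' \<open>y4 \<noteq> y0\<close> by auto
  then have "z \<in> {y0, y1, y2, y3, y4}" using set_eq_Y z(3) by fastforce
  then have "row_gaps x4 = {y4, y0}" using z cols x3(2) x4(1) x4' by auto
  moreover have "distinct [x0, x1, x2, x3, x4]" "set [x0, x1, x2, x3, x4] \<subseteq> X"
    using xs x3 x3' x4 x4' by auto
  ultimately show ?thesis
    using co_C10_from_rows ys' rows y4(2) by blast
qed

lemma co_C10_or_co_C4_C6:
  "has_biadjacency X Y R 5 co_C10 \<or> has_biadjacency X Y R 5 co_C4_C6"
proof -
  obtain x0 where x0: "x0 \<in> X" by (rule exists_outside[of "{}"]) simp_all
  obtain y0 where y0: "y0 \<in> row_gaps x0"
    using card_row_gaps[OF x0] by (metis card.empty ex_in_conv zero_neq_numeral)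
  obtain y1 where y1: "y1 \<noteq> y0" "row_gaps x0 = {y0, y1}" "y1 \<in> Y" "x0 \<in> col_gaps y1"
    by (rule row_gaps_other[OF x0 y0])
  obtain x1 where x1: "x1 \<noteq> x0" "col_gaps y1 = {x0, x1}" "x1 \<in> X" "y1 \<in> row_gaps x1"
    by (rule col_gaps_other[OF y1(3,4)])
  obtain y2 where y2: "y2 \<noteq> y1" "row_gaps x1 = {y1, y2}" "y2 \<in> Y" "x1 \<in> col_gaps y2"
    by (rule row_gaps_other[OF x1(3,4)])
  have y0Y: "y0 \<in> Y" using row_gaps_subset[OF x0] y0 by blast
  show ?thesis
  proof (cases "y2 = y0")
    case True
    then show ?thesis using twin_rows[OF x0 x1(3)] x1(1) y1(1,2) y2(2) by (auto simp: insert_commute)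
  next
    case y20: False
    obtain x2 where x2: "x2 \<noteq> x1" "col_gaps y2 = {x1, x2}" "x2 \<in> X" "y2 \<in> row_gaps x2"
      by (rule col_gaps_other[OF y2(3,4)])
    obtain y3 where y3: "y3 \<noteq> y2" "row_gaps x2 = {y2, y3}" "y3 \<in> Y" "x2 \<in> col_gaps y3"
      by (rule row_gaps_other[OF x2(3,4)])
    have xs: "distinct [x0, x1, x2]" using x1(1) x2(1,4) y1(2) y20 y2(1) by auto
    have "y3 \<noteq> y1" using x1(2) y3(4) xs by auto
    show ?thesis
    proof (cases "y3 = y0")
      case True
      then show ?thesis
        using hexagon_rows[OF x0 x1(3) x2(3) xs y0Y y1(3) y2(3)] y1 y2 y3 y20 by auto
    next
      case False
      then show ?thesis
        using decagon_rows[OF x0 x1(3) x2(3) xs y0Y y1(3) y2(3) y3(3)] y1 y2 y3 y20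
          \<open>y3 \<noteq> y1\<close> by auto
    qed
  qed
qed

end

section \<open>Bipartite cubic graphs on at most ten vertices\<close>

lemma card_filter_not:
  assumes "finite Y"
  shows "card {y\<in>Y. \<not> P y} = card Y - card {y\<in>Y. P y}"
proof -
  have "{y\<in>Y. \<not> P y} = Y - {y\<in>Y. P y}" by blast
  then show ?thesis using assms by (simp add: card_Diff_subset)
qed

locale bipartite_cubic_graph = cubic_graph +
  fixes X :: "'a set"
  assumes X_subset: "X \<subseteq> V" and sides: "\<And>e. e \<in> E \<Longrightarrow> card (e \<inter> X) = 1"
begin

lemma edge_split:
  assumes e: "e \<in> E"
  obtains x y where "x \<in> X" "y \<in> V - X" "e = {x, y}"
proof -
  obtain u w where uw: "e = {u, w}" "u \<noteq> w"
    using card_edge[OF e] card_2_iff by metis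
  moreover have "card (e \<inter> X) = 1" using sides[OF e] .
  ultimately have "(u \<in> X \<and> w \<notin> X) \<or> (w \<in> X \<and> u \<notin> X)"
    by (cases "u \<in> X"; cases "w \<in> X") auto
  then show ?thesis
    using that edge_subset[OF e] uw by (auto simp: insert_commute)
qed

lemma swap_sides: "bipartite_cubic_graph V E (V - X)"
proof
  fix e assume e: "e \<in> E"
  obtain x y where "x \<in> X" "y \<in> V - X" "e = {x, y}" by (rule edge_split[OF e])
  then show "card (e \<inter> (V - X)) = 1" by auto
qed auto

lemma card_neighbours:
  assumes x: "x \<in> X"
  shows "card {y\<in>V - X. {x, y} \<in> E} = 3"
proof -
  have "{e\<in>E. x \<in> e} = (\<lambda>y. {x, y}) ` {y\<in>V - X. {x, y} \<in> E}"
  proof (intro set_eqI iffI)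
    fix e assume "e \<in> {e\<in>E. x \<in> e}"
    then obtain a b where "a \<in> X" "b \<in> V - X" "e = {a, b}" "e \<in> E" "x \<in> e"
      using edge_split by blast
    then show "e \<in> (\<lambda>y. {x, y}) ` {y\<in>V - X. {x, y} \<in> E}" using x by auto
  qed auto
  moreover have "inj_on (\<lambda>y. {x, y}) {y\<in>V - X. {x, y} \<in> E}"
    using x by (auto intro!: inj_onI simp: doubleton_eq_iff)
  moreover have "card {e\<in>E. x \<in> e} = 3" using cubic x X_subset unfolding cubic_def by blast
  ultimately show ?thesis by (simp add: card_image)
qed

lemma card_sides: "card (V - X) = card X"
proof -
  let ?adj = "\<lambda>x y. {x, y} \<in> E"
  have "card (SIGMA x:X. {y\<in>V - X. ?adj x y}) = 3 * card X"
    using card_neighbours finite_V X_subset finite_subset by (subst card_SigmaI) auto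
  moreover have "card (SIGMA y:V - X. {x\<in>V - (V - X). ?adj y x}) = 3 * card (V - X)"
    using bipartite_cubic_graph.card_neighbours[OF swap_sides] finite_V by (subst card_SigmaI) auto
  moreover have "(SIGMA y:V - X. {x\<in>V - (V - X). ?adj y x})
      = prod.swap ` (SIGMA x:X. {y\<in>V - X. ?adj x y})"
    using X_subset by (auto simp: insert_commute)
  ultimately show ?thesis
    by (simp add: card_image)
qed

lemma biadjacency_from_has_biadjacency:
  assumes "has_biadjacency X (V - X) (\<lambda>x y. {x, y} \<in> E) n M"
  obtains gx gy where "biadjacency V E X n gx gy M"
proof -
  obtain gx gy where gx: "bij_betw gx {..<n} X" and gy: "bij_betw gy {..<n} (V - X)"
    and adj: "\<And>i j. i < n \<Longrightarrow> j < n \<Longrightarrow> {gx i, gy j} \<in> E \<longleftrightarrow> M i j"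
    using assms unfolding has_biadjacency_def by blast
  have "E = {{gx i, gy j} | i j. i < n \<and> j < n \<and> M i j}"
  proof (intro set_eqI iffI)
    fix e assume "e \<in> E"
    then obtain x y where "x \<in> X" "y \<in> V - X" "e = {x, y}" "e \<in> E" by (metis edge_split)
    moreover obtain i j where "i < n" "x = gx i" "j < n" "y = gy j"
      using bij_betw_imp_surj_on[OF gx] bij_betw_imp_surj_on[OF gy] calculation(1,2) by blast
    ultimately show "e \<in> {{gx i, gy j} | i j. i < n \<and> j < n \<and> M i j}" using adj by blast
  qed (use adj in blast)
  then show ?thesis
    using that gx gy X_subset by (simp add: biadjacency_def)
qed

lemma edge_kempe_classes3_gt1_by_biadjacency:
  assumes "has_biadjacency X (V - X) (\<lambda>x y. {x, y} \<in> E) n M"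
    and "latin_table n M L1" "latin_table n M L2" and "odd (lone_matches n M L2 L1)"
  shows "edge_kempe_classes3 E > 1"
proof -
  obtain gx gy where "biadjacency V E X n gx gy M"
    by (rule biadjacency_from_has_biadjacency[OF assms(1)])
  then show ?thesis
    using biadjacency.edge_kempe_classes3_gt1_by_tables cubic assms(2-4) by blast
qed

lemma planar_if_cube_biadjacency:
  assumes "has_biadjacency X (V - X) (\<lambda>x y. {x, y} \<in> E) 4 (\<lambda>i j. i \<noteq> j)"
  shows "planar V E"
proof -
  obtain gx gy where "biadjacency V E X 4 gx gy (\<lambda>i j. i \<noteq> j)"
    by (rule biadjacency_from_has_biadjacency[OF assms])
  then show ?thesis using biadjacency.planar_cube by blast
qed

lemma card_neighbours_other_side:
  assumes "y \<in> V - X"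
  shows "card {x\<in>X. {x, y} \<in> E} = 3"
proof -
  have "V - (V - X) = X" using X_subset by blast
  then show ?thesis
    using bipartite_cubic_graph.card_neighbours[OF swap_sides assms] by (simp add: insert_commute)
qed

lemma card_gaps:
  shows "x \<in> X \<Longrightarrow> card {y\<in>V - X. {x, y} \<notin> E} = card X - 3"
    and "y \<in> V - X \<Longrightarrow> card {x\<in>X. {x, y} \<notin> E} = card X - 3"
proof -
  have fin: "finite X" "finite (V - X)" using finite_V X_subset finite_subset by auto
  show "x \<in> X \<Longrightarrow> card {y\<in>V - X. {x, y} \<notin> E} = card X - 3"
    using card_filter_not[OF fin(2)] card_neighbours card_sides by simp
  show "y \<in> V - X \<Longrightarrow> card {x\<in>X. {x, y} \<notin> E} = card X - 3"
    using card_filter_not[OF fin(1)] card_neighbours_other_side by simp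
qed

lemma card_side_cases:
  assumes "card V \<le> 10"
  obtains "X = {}" | "card X = 3" | "card X = 4" | "card X = 5"
proof -
  have fin: "finite X" "finite (V - X)" using finite_V X_subset finite_subset by auto
  have "card V = card X + card (V - X)"
    using fin X_subset card_Un_disjoint[OF fin] by (metis Diff_disjoint Diff_partition)
  then have "card X \<le> 5" using assms card_sides by simp
  moreover have "3 \<le> card X" if "x \<in> X" for x
    using card_neighbours[OF that] card_sides fin(2) card_mono[of "V - X" "{y\<in>V - X. {x, y} \<in> E}"]
    by auto
  ultimately show ?thesis using that by force
qed

lemma planar_or_edge_kempe_classes3_gt1:
  assumes "card V \<le> 10"
  shows "planar V E \<or> edge_kempe_classes3 E > 1"
proof -
  let ?Y = "V - X" and ?adj = "\<lambda>x y. {x, y} \<in> E"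
  have fin: "finite X" "finite ?Y" using finite_V X_subset finite_subset by auto
  from assms show ?thesis
  proof (cases rule: card_side_cases)
    case 1
    then have "V = {}" "E = {}" using card_sides fin edge_subset card_edge by fastforce+
    then show ?thesis unfolding planar_def by simp
  next
    case 2
    moreover have "?adj x y" if "x \<in> X" "y \<in> ?Y" for x y
      using card_gaps(1)[OF that(1)] that 2 finite_V by (auto simp: card_eq_0_iff)
    ultimately have "has_biadjacency X ?Y ?adj 3 (\<lambda>_ _. True)"
      using has_biadjacency_complete[OF fin] card_sides by simp
    then show ?thesis
      using edge_kempe_classes3_gt1_by_biadjacency latin_K33 lone_matches_K33 by blast
  next
    case 3
    then have "has_biadjacency X ?Y ?adj 4 (\<lambda>i j. i \<noteq> j)"
      using has_biadjacency_one_gap[OF fin] card_gaps card_sides by simp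
    then show ?thesis using planar_if_cube_biadjacency by blast
  next
    case 4
    then interpret two_gaps X ?Y ?adj
      using fin card_gaps card_sides by unfold_locales auto
    have "has_biadjacency X ?Y ?adj 5 co_C10 \<or> has_biadjacency X ?Y ?adj 5 co_C4_C6"
      by (rule co_C10_or_co_C4_C6)
    then show ?thesis
      using edge_kempe_classes3_gt1_by_biadjacency latin_co_C10 lone_matches_co_C10
        latin_co_C4_C6 lone_matches_co_C4_C6 by blast
  qed
qed

end

theorem lemma16:
  fixes V :: "'a set" and E :: "'a set set"
  assumes "simple_graph V E" and "bipartite V E" and "\<not> planar V E"
      and "cubic V E" and "card V \<le> 10"
  shows "edge_kempe_classes3 E > 1"
proof -
  obtain X where "X \<subseteq> V" "\<forall>e\<in>E. card (e \<inter> X) = 1"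
    using assms(2) unfolding bipartite_def by blast
  then interpret bipartite_cubic_graph V E X
    using assms(1,4) by unfold_locales auto
  show ?thesis
    using planar_or_edge_kempe_classes3_gt1 assms(3,5) by blast
qed

end
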